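(* Let $L\ge 2$, $k\ge 2$ be integers, $\kappa:\{1,\dots,k-1\}\times\mathbb{N}\to\{0,\dots,L-1\}$ a map, and let $(b(n))_{n=0}^\infty$ be the $(L,k,\kappa)$-TM sequence over the letters $a_j=\exp\frac{2\pi\sqrt{-1}\,j}{L}$, $0\le j\le L-1$. Let $(a(n))_{n=0}^\infty$ be the sequence with $a(0)=0$, $0\le a(n)\le L-1$ and $a(n)\equiv\sum_{y=0}^\infty\sum_{s=1}^{k-1}\kappa(s,y)\,d(n;sk^y)\pmod L$. Then for every $n\ge 0$, $$\frac{L}{2\pi\sqrt{-1}}\log b(n)\equiv a(n)\pmod L$$ (for any determination of the logarithm).
   Context: $\mathbb{N}$ is the set of non-negative integers. Given pairwise distinct complex numbers $a_0,\dots,a_{L-1}$, let $f$ be the map on $\{a_0,\dots,a_{L-1}\}$ with $f(a_i)=a_{i+1}$ (indices modulo $L$), extended letterwise to finite words; $f^j$ its $j$-fold iterate, $f^0$ the identity. Define $A_0=a_0$ and $A_{n+1}=A_n\,f^{\kappa(1,n)}(A_n)\cdots f^{\kappa(k-1,n)}(A_n)$ (concatenation); $A_n$ is a prefix of $A_{n+1}$, and the infinite word $A_\infty=\lim A_n$ indexed from $0$ is the $(L,k,\kappa)$-TM sequence. Every $n\ge1$ has a unique $k$-adic expansion $n=\sum_{q=1}^r s_{n,q}k^{w_n(q)}$ with $1\le s_{n,q}\le k-1$, $0\le w_n(1)<\dots<w_n(r)$; $d(n;sk^y)=1$ if some $q$ has $s_{n,q}=s$ and $w_n(q)=y$, and $d(n;sk^y)=0$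 otherwise. *)

theory Defs
  imports "HOL-Analysis.Analysis" "HOL-Number_Theory.Cong"
begin

definition tm_letter :: "nat \<Rightarrow> nat \<Rightarrow> complex" where
  "tm_letter L j = exp (2 * of_real pi * \<i> * of_nat j / of_nat L)"

text \<open>The map f on the alphabet {a_0,...,a_(L-1)}: f(a_i) = a_(i+1 mod L).
  (Outside the alphabet it is the identity; this never matters.)\<close>
definition tm_f :: "nat \<Rightarrow> complex \<Rightarrow> complex" where
  "tm_f L z = (if \<exists>i<L. z = tm_letter L i
               then tm_letter L (Suc (THE i. i < L \<and> z = tm_letter L i) mod L)
               else z)"

fun tmA :: "nat \<Rightarrow> nat \<Rightarrow> (nat \<Rightarrow> nat \<Rightarrow> nat) \<Rightarrow> nat \<Rightarrow> complex list" where
  "tmA L k \<kappa> 0 = [tm_letter L 0]"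
| "tmA L k \<kappa> (Suc n) =
     tmA L k \<kappa> n @ concat (map (\<lambda>s. map ((tm_f L) ^^ (\<kappa> s n)) (tmA L k \<kappa> n)) [1..<k])"

text \<open>The infinite word A_infinity = lim A_n, indexed from 0: the n-th letter is the
  eventual value of the n-th letter of A_m.\<close>
definition tm_seq :: "nat \<Rightarrow> nat \<Rightarrow> (nat \<Rightarrow> nat \<Rightarrow> nat) \<Rightarrow> nat \<Rightarrow> complex" where
  "tm_seq L k \<kappa> n =
     (THE c. \<exists>m0. \<forall>m\<ge>m0. n < length (tmA L k \<kappa> m) \<and> tmA L k \<kappa> m ! n = c)"

text \<open>d(n; s k^y): 1 iff the k-adic expansion of n has digit s (1 <= s <= k-1)
  at position y.\<close>
definition tm_d :: "nat \<Rightarrow> nat \<Rightarrow> nat \<Rightarrow> nat \<Rightarrow> nat" where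
  "tm_d k n s y = (if 1 \<le> s \<and> s \<le> k - 1 \<and> n div k ^ y mod k = s then 1 else 0)"

end

theory Submission imports Defs begin

text \<open>Each word A_(m+1) consists of k blocks of length k^m, the block with index q being
  A_m shifted by f^(kappa(q,m)) (no shift for q = 0). Hence the n-th letter of A_m is
  f^c(a_0) = a_(c mod L), where c is the sum of kappa(s,y) over the nonzero k-adic digits s
  of n at positions y < m. Since a_c = exp(2 pi i c/L), every logarithm of it is
  (2 pi i/L)(c + L t), so L/(2 pi i) log b(n) is congruent to c, hence to a(n), mod L.\<close>

lemma exp_eq_tm_letter_iff:
  assumes "L > 0"
  shows "exp z = tm_letter L c \<longleftrightarrow>
           (\<exists>t::int. of_nat L / (2 * of_real pi * \<i>) * z = of_int (int c + int L * t))"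
proof -
  have nz: "2 * of_real pi * \<i> \<noteq> (0::complex)" "(of_nat L :: complex) \<noteq> 0"
    using assms by simp_all
  have "exp z = tm_letter L c \<longleftrightarrow>
          (\<exists>t::int. z = 2 * of_real pi * \<i> * of_nat c / of_nat L + of_int (2 * t) * pi * \<i>)"
    unfolding tm_letter_def using exp_eq[of z] by simp
  also have "\<dots> \<longleftrightarrow> (\<exists>t::int. of_nat L / (2 * of_real pi * \<i>) * z = of_int (int c + int L * t))"
  proof (intro ex_cong1)
    fix t :: int
    show "z = 2 * of_real pi * \<i> * of_nat c / of_nat L + of_int (2 * t) * pi * \<i> \<longleftrightarrow>
          of_nat L / (2 * of_real pi * \<i>) * z = of_int (int c + int L * t)"
      using nz by (auto simp: field_simps)
  qed
  finally show ?thesis .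
qed

lemma tm_letter_eq_iff:
  assumes "L > 0"
  shows "tm_letter L i = tm_letter L j \<longleftrightarrow> [i = j] (mod L)"
proof -
  have "tm_letter L i = tm_letter L j \<longleftrightarrow>
          (\<exists>t::int. of_nat L / (2 * of_real pi * \<i>) * (2 * of_real pi * \<i> * of_nat i / of_nat L)
                     = of_int (int j + int L * t))"
    using exp_eq_tm_letter_iff[OF assms] by (simp add: tm_letter_def)
  also have "\<dots> \<longleftrightarrow> (\<exists>t::int. int i = int j + int L * t)"
  proof (intro ex_cong1)
    fix t :: int
    have "of_nat L / (2 * of_real pi * \<i>) * (2 * of_real pi * \<i> * of_nat i / of_nat L) = (of_int (int i) :: complex)"
      using assms by simp
    then show "of_nat L / (2 * of_real pi * \<i>) * (2 * of_real pi * \<i> * of_nat i / of_nat L)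
                     = of_int (int j + int L * t) \<longleftrightarrow> int i = int j + int L * t"
      by (simp only: of_int_eq_iff)
  qed
  also have "\<dots> \<longleftrightarrow> [i = j] (mod L)"
    by (metis cong_int_iff cong_iff_lin cong_sym)
  finally show ?thesis .
qed

lemma tm_f_tm_letter:
  assumes "L > 0"
  shows "tm_f L (tm_letter L i) = tm_letter L (Suc i)"
proof -
  have "(THE j. j < L \<and> tm_letter L i = tm_letter L j) = i mod L"
    using assms by (intro the_equality) (auto simp: tm_letter_eq_iff cong_def)
  moreover have "\<exists>j<L. tm_letter L i = tm_letter L j"
    using assms by (intro exI[of _ "i mod L"]) (simp add: tm_letter_eq_iff cong_def)
  ultimately show ?thesis
    using assms by (simp add: tm_f_def tm_letter_eq_iff cong_def mod_Suc_eq)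
qed

lemma funpow_tm_f_tm_letter:
  assumes "L > 0"
  shows "(tm_f L ^^ m) (tm_letter L i) = tm_letter L (i + m)"
  by (induction m) (simp_all add: tm_f_tm_letter[OF assms])

lemma length_tmA:
  assumes "k \<ge> 1"
  shows "length (tmA L k \<kappa> n) = k ^ n"
proof (induction n)
  case (Suc n)
  then have "length (tmA L k \<kappa> (Suc n)) = k ^ n + (k - 1) * k ^ n"
    by (simp add: length_concat comp_def sum_list_triv)
  also have "\<dots> = k ^ Suc n"
    using assms by (cases k) auto
  finally show ?case .
qed simp

lemma nth_concat_map_equal_length:
  assumes "\<And>x. x \<in> set xs \<Longrightarrow> length (g x) = l" "i < length xs" "r < l"
  shows "concat (map g xs) ! (i * l + r) = g (xs ! i) ! r"
  using assms
proof (induction xs arbitrary: i)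
  case (Cons x xs)
  then show ?case
    by (cases i) (auto simp: nth_append)
qed simp

lemma digit_add_mult_power_low:
  fixes k :: nat
  assumes "y < m" "r < k ^ m"
  shows "(q * k ^ m + r) div k ^ y mod k = r div k ^ y mod k"
proof -
  have "k > 0"
    using assms by (cases "k = 0") (simp_all add: zero_power)
  have split: "q * k ^ m + r = r + q * k ^ (m - y) * k ^ y"
    using assms(1) by (simp flip: power_add)
  have "(q * k ^ m + r) div k ^ y = q * k ^ (m - y) + r div k ^ y"
    unfolding split using \<open>k > 0\<close> by simp
  moreover have "k dvd q * k ^ (m - y)"
    using assms(1) by simp
  ultimately show ?thesis
    by (simp add: mod_add_left_eq [symmetric])
qed

lemma sum_kappa_tm_d:
  assumes "k > 0"
  shows "(\<Sum>s\<in>{1..k-1}. \<kappa> s y * tm_d k n s y) =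
           (if n div k ^ y mod k = 0 then 0 else \<kappa> (n div k ^ y mod k) y)"
proof -
  have "(\<Sum>s\<in>{1..k-1}. \<kappa> s y * tm_d k n s y) =
          (\<Sum>s\<in>{1..k-1}. if s = n div k ^ y mod k then \<kappa> s y else 0)"
    by (intro sum.cong) (auto simp: tm_d_def)
  moreover have "n div k ^ y mod k \<le> k - 1"
    using mod_less_divisor[OF assms, of "n div k ^ y"] by linarith
  ultimately show ?thesis
    by (auto simp: sum.delta')
qed

definition tm_exponent :: "nat \<Rightarrow> (nat \<Rightarrow> nat \<Rightarrow> nat) \<Rightarrow> nat \<Rightarrow> nat \<Rightarrow> nat" where
  "tm_exponent k \<kappa> m n = (\<Sum>y<m. \<Sum>s\<in>{1..k-1}. \<kappa> s y * tm_d k n s y)"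

lemma tm_exponent_add_mult_power:
  assumes "q < k" "r < k ^ m"
  shows "tm_exponent k \<kappa> (Suc m) (q * k ^ m + r) =
           tm_exponent k \<kappa> m r + (if q = 0 then 0 else \<kappa> q m)"
proof -
  have "tm_exponent k \<kappa> m (q * k ^ m + r) = tm_exponent k \<kappa> m r"
    unfolding tm_exponent_def tm_d_def using assms(2)
    by (intro sum.cong refl) (simp add: digit_add_mult_power_low)
  moreover have "(\<Sum>s\<in>{1..k-1}. \<kappa> s m * tm_d k (q * k ^ m + r) s m) = (if q = 0 then 0 else \<kappa> q m)"
  proof -
    have "(q * k ^ m + r) div k ^ m mod k = q"
      using assms by simp
    then show ?thesis
      using sum_kappa_tm_d[of k \<kappa> m "q * k ^ m + r"] assms(1) by simp
  qed
  ultimately show ?thesis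
    by (simp add: tm_exponent_def)
qed

lemma nth_tmA:
  assumes "L > 0" "k > 0" "n < k ^ m"
  shows "tmA L k \<kappa> m ! n = tm_letter L (tm_exponent k \<kappa> m n)"
  using assms(3)
proof (induction m arbitrary: n)
  case 0
  then show ?case by (simp add: tm_exponent_def)
next
  case (Suc m)
  define q r where "q = n div k ^ m" and "r = n mod k ^ m"
  have n: "n = q * k ^ m + r"
    unfolding q_def r_def by (rule div_mult_mod_eq [symmetric])
  have q: "q < k" and r: "r < k ^ m"
    using Suc.prems assms(2) by (simp_all add: q_def r_def less_mult_imp_div_less mult.commute)
  have len: "length (tmA L k \<kappa> m) = k ^ m"
    using assms(2) by (simp add: length_tmA)
  have exponent: "tm_exponent k \<kappa> (Suc m) n = tm_exponent k \<kappa> m r + (if q = 0 then 0 else \<kappa> q m)"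
    using tm_exponent_add_mult_power[OF q r] n by simp
  show ?case
  proof (cases "q = 0")
    case True
    then show ?thesis
      using Suc.IH[OF r] len r n exponent by (simp add: nth_append)
  next
    case False
    have n': "n = length (tmA L k \<kappa> m) + ((q - 1) * k ^ m + r)"
      using False n len by (cases q) simp_all
    have "tmA L k \<kappa> (Suc m) ! n =
            concat (map (\<lambda>s. map (tm_f L ^^ \<kappa> s m) (tmA L k \<kappa> m)) [1..<k]) ! ((q - 1) * k ^ m + r)"
      unfolding n' tmA.simps by (rule nth_append_length_plus)
    also have "\<dots> = (tm_f L ^^ \<kappa> q m) (tmA L k \<kappa> m ! r)"
      using False q r len by (subst nth_concat_map_equal_length) simp_all
    also have "\<dots> = tm_letter L (tm_exponent k \<kappa> (Suc m) n)"
      using False Suc.IH[OF r] exponent by (simp add: funpow_tm_f_tm_letter[OF assms(1)])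
    finally show ?thesis .
  qed
qed

lemma less_power_self:
  fixes k :: nat
  assumes "1 < k"
  shows "n < k ^ n"
  using less_exp[of n] power_mono[of 2 k n] assms by linarith

lemma tm_exponent_eq_sum_atMost:
  assumes "k \<ge> 2" "n < k ^ m"
  shows "tm_exponent k \<kappa> m n = (\<Sum>y\<le>n. \<Sum>s\<in>{1..k-1}. \<kappa> s y * tm_d k n s y)"
proof -
  define g where "g y = (\<Sum>s\<in>{1..k-1}. \<kappa> s y * tm_d k n s y)" for y
  have vanish: "g y = 0" if "m \<le> y \<or> n < y" for y
  proof -
    have "k ^ m \<le> k ^ y \<or> k ^ n < k ^ y"
      using that assms(1) by (auto intro: power_increasing power_strict_increasing)
    then have "n < k ^ y"
      using assms less_power_self[of k n] by linarith
    then show ?thesis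
      by (simp add: g_def tm_d_def)
  qed
  have "(\<Sum>y<m. g y) = (\<Sum>y<max m (Suc n). g y)"
    by (rule sum.mono_neutral_left) (auto intro!: vanish)
  also have "\<dots> = (\<Sum>y\<le>n. g y)"
    by (rule sum.mono_neutral_right) (auto intro!: vanish)
  finally show ?thesis
    by (simp add: tm_exponent_def g_def)
qed

lemma tm_seq_eq_tm_letter:
  assumes "L > 0" "k \<ge> 2"
  shows "tm_seq L k \<kappa> n = tm_letter L (\<Sum>y\<le>n. \<Sum>s\<in>{1..k-1}. \<kappa> s y * tm_d k n s y)"
proof -
  let ?c = "tm_letter L (\<Sum>y\<le>n. \<Sum>s\<in>{1..k-1}. \<kappa> s y * tm_d k n s y)"
  have stable: "n < length (tmA L k \<kappa> m) \<and> tmA L k \<kappa> m ! n = ?c" if "n \<le> m" for m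
  proof -
    have "k ^ n \<le> k ^ m"
      using that assms(2) by (simp add: power_increasing)
    then have "n < k ^ m"
      using less_power_self[of k n] assms(2) by linarith
    then show ?thesis
      using assms by (simp add: length_tmA nth_tmA tm_exponent_eq_sum_atMost)
  qed
  show ?thesis
    unfolding tm_seq_def
  proof (rule the_equality)
    show "\<exists>m0. \<forall>m\<ge>m0. n < length (tmA L k \<kappa> m) \<and> tmA L k \<kappa> m ! n = ?c"
      using stable by blast
  next
    fix c
    assume "\<exists>m0. \<forall>m\<ge>m0. n < length (tmA L k \<kappa> m) \<and> tmA L k \<kappa> m ! n = c"
    then obtain m0 where "\<forall>m\<ge>m0. tmA L k \<kappa> m ! n = c"
      by blast
    then show "c = ?c"
      using stable[of "max m0 n"] by simp
  qed
qed

theorem proposition2p1: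
  fixes L k :: nat and \<kappa> :: "nat \<Rightarrow> nat \<Rightarrow> nat" and a :: "nat \<Rightarrow> nat"
  assumes "L \<ge> 2" and "k \<ge> 2"
    and "\<And>s y. 1 \<le> s \<Longrightarrow> s \<le> k - 1 \<Longrightarrow> \<kappa> s y < L"
    and "a 0 = 0"
    and "\<And>n. a n \<le> L - 1"
    and "\<And>n. [a n = (\<Sum>y\<le>n. \<Sum>s\<in>{1..k-1}. \<kappa> s y * tm_d k n s y)] (mod L)"
  shows "\<forall>n. \<forall>z. exp z = tm_seq L k \<kappa> n \<longrightarrow>
           (\<exists>m::int. of_nat L / (2 * of_real pi * \<i>) * z = of_int m \<and>
                     [m = int (a n)] (mod int L))"
proof (intro allI impI)
  fix n z
  assume "exp z = tm_seq L k \<kappa> n"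
  define c where "c = (\<Sum>y\<le>n. \<Sum>s\<in>{1..k-1}. \<kappa> s y * tm_d k n s y)"
  have L: "L > 0"
    using assms(1) by simp
  have "exp z = tm_letter L c"
    using \<open>exp z = tm_seq L k \<kappa> n\<close> tm_seq_eq_tm_letter[OF L assms(2)] by (simp add: c_def)
  then obtain t :: int where t: "of_nat L / (2 * of_real pi * \<i>) * z = of_int (int c + int L * t)"
    using exp_eq_tm_letter_iff[OF L] by blast
  have "[int c + int L * t = int c] (mod int L)"
    by (simp add: cong_def)
  also have "[int c = int (a n)] (mod int L)"
    using assms(6)[of n] unfolding c_def cong_int_iff by (rule cong_sym)
  finally show "\<exists>m::int. of_nat L / (2 * of_real pi * \<i>) * z = of_int m \<and> [m = int (a n)] (mod int L)"
    using t by blast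
qed

end
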